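(* Let $\Lambda$ be an essential row-finite 2-graph and let $\mathcal G=\{\mathcal G^j_v: v\in\Lambda^0, 1\le j\le m(v)\}$ be an insplitting partition of its 1-skeleton satisfying the pairing condition. Then the quotient $\Lambda_I=G_I^*/\sim_I$ of the path category of the insplit 2-colored graph $G_I$ is a 2-graph.
   Context: A 2-graph is a countable category $\Lambda$ with a functor $d:\Lambda\to\mathbb N^2$ with unique factorization (if $d(\lambda)=m+n$ there are unique $\mu,\nu$ with $d(\mu)=m,d(\nu)=n,\lambda=\mu\nu$; composition $\mu\nu$ when $s(\mu)=r(\nu)$). $\Lambda^m=d^{-1}(m)$, $\Lambda^0$ are the vertices, $\Lambda^1=\Lambda^{\varepsilon_1}\sqcup\Lambda^{\varepsilon_2}$; row-finite: $v\Lambda^m$ finite; essential: $v\Lambda^m$ and $\Lambda^mv$ nonempty for all $v,m$. The 1-skeleton is the 2-colored graph $G=(\Lambda^0,\Lambda^1,r,s)$; $\Lambda$ is the quotient of its path category by the relation $\sim$ generated by commuting squares $fg\sim ab$ (two-colored paths equal in $\Lambda$). An insplitting partition: for each $v\in\Lambda^0$, a partition of $v\Lambda^1=r^{-1}(v)\cap\Lambda^1$ into nonempty sets $\mathcal G^1_v,\dots,\mathcal G^{m(v)}_v$, satisfying the pairing condition: whenever $a,f\in v\Lambda^1$ and there exist edges $g,b$ with $ag\sim fb$, then $f\in\mathcal G^j_v$ iff $a\in\mathcal G^j_v$. The insplit 2-colored graph $G_I$: vertices $v^i$ ($1\le i\le m(v)$); edges $f^i$ ($f\in\Lambda^1$,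 $1\le i\le m(s(f))$), color $d(f^i)=d(f)$, $s(f^i)=s(f)^i$, $r(f^i)=r(f)^j$ where $f\in\mathcal G^j_{r(f)}$. $\sim_I$ is the equivalence relation on paths of $G_I$ (each vertex/edge equivalent only to itself, compatible with concatenation) generated by the commuting squares $f^ig^k\sim_I a^jb^k$ iff $g\in\mathcal G^i_{s(f)}$, $b\in\mathcal G^j_{s(a)}$ and $fg\sim ab$ in $\Lambda$. *)

theory Defs
  imports Main "HOL-Library.Product_Plus" "HOL-Library.Countable_Set"
begin

text \<open>A 2-graph is given by its set of morphisms M, range and source maps r, s
(sending a morphism to the identity morphism at its range / source object),
composition cmp (meaningful when s x = r y), and a degree functor d into N^2
(represented as nat * nat with componentwise addition). Objects are identified with
identity morphisms.\<close>

definition is_2graph ::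
  "'m set \<Rightarrow> ('m \<Rightarrow> 'm) \<Rightarrow> ('m \<Rightarrow> 'm) \<Rightarrow> ('m \<Rightarrow> 'm \<Rightarrow> 'm) \<Rightarrow> ('m \<Rightarrow> nat \<times> nat) \<Rightarrow> bool"
where
  "is_2graph M r s cmp d \<longleftrightarrow>
     countable M \<and>
     (\<forall>x\<in>M. r x \<in> M \<and> s x \<in> M \<and> r (r x) = r x \<and> s (r x) = r x
              \<and> r (s x) = s x \<and> s (s x) = s x) \<and>
     (\<forall>x\<in>M. \<forall>y\<in>M. s x = r y \<longrightarrow>
         cmp x y \<in> M \<and> r (cmp x y) = r x \<and> s (cmp x y) = s y) \<and>
     (\<forall>x\<in>M. \<forall>y\<in>M. \<forall>z\<in>M. s x = r y \<and> s y = r z \<longrightarrow>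
         cmp (cmp x y) z = cmp x (cmp y z)) \<and>
     (\<forall>x\<in>M. cmp (r x) x = x \<and> cmp x (s x) = x) \<and>
     (\<forall>x\<in>M. d (r x) = 0) \<and>
     (\<forall>x\<in>M. \<forall>y\<in>M. s x = r y \<longrightarrow> d (cmp x y) = d x + d y) \<and>
     (\<forall>x\<in>M. \<forall>m n. d x = m + n \<longrightarrow>
         (\<exists>!p. fst p \<in> M \<and> snd p \<in> M \<and> s (fst p) = r (snd p) \<and>
               d (fst p) = m \<and> d (snd p) = n \<and> cmp (fst p) (snd p) = x))"

definition deg_set :: "'m set \<Rightarrow> ('m \<Rightarrow> nat \<times> nat) \<Rightarrow> nat \<times> nat \<Rightarrow> 'm set" where
  "deg_set M d n = {x\<in>M. d x = n}"

definition verts :: "'m set \<Rightarrow> ('m \<Rightarrow> nat \<times> nat) \<Rightarrow> 'm set" where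
  "verts M d = deg_set M d (0, 0)"

definition edges :: "'m set \<Rightarrow> ('m \<Rightarrow> nat \<times> nat) \<Rightarrow> 'm set" where
  "edges M d = deg_set M d (1, 0) \<union> deg_set M d (0, 1)"

definition row_finite ::
  "'m set \<Rightarrow> ('m \<Rightarrow> 'm) \<Rightarrow> ('m \<Rightarrow> nat \<times> nat) \<Rightarrow> bool" where
  "row_finite M r d \<longleftrightarrow> (\<forall>v\<in>verts M d. \<forall>n. finite {x\<in>deg_set M d n. r x = v})"

definition essential ::
  "'m set \<Rightarrow> ('m \<Rightarrow> 'm) \<Rightarrow> ('m \<Rightarrow> 'm) \<Rightarrow> ('m \<Rightarrow> nat \<times> nat) \<Rightarrow> bool" where
  "essential M r s d \<longleftrightarrow> (\<forall>v\<in>verts M d. \<forall>n.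
      {x\<in>deg_set M d n. r x = v} \<noteq> {} \<and> {x\<in>deg_set M d n. s x = v} \<noteq> {})"

text \<open>The partition is given by the number of blocks mm v and the blocks G v j, 1 \<le> j \<le> mm v,
of v Lambda^1 = r^{-1}(v) \<inter> Lambda^1.\<close>

definition in_edges :: "'m set \<Rightarrow> ('m \<Rightarrow> 'm) \<Rightarrow> ('m \<Rightarrow> nat \<times> nat) \<Rightarrow> 'm \<Rightarrow> 'm set" where
  "in_edges M r d v = {f\<in>edges M d. r f = v}"

definition insplit_partition ::
  "'m set \<Rightarrow> ('m \<Rightarrow> 'm) \<Rightarrow> ('m \<Rightarrow> nat \<times> nat) \<Rightarrow> ('m \<Rightarrow> nat) \<Rightarrow> ('m \<Rightarrow> nat \<Rightarrow> 'm set) \<Rightarrow> bool"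
where
  "insplit_partition M r d mm G \<longleftrightarrow> (\<forall>v\<in>verts M d.
      (\<forall>j\<in>{1..mm v}. G v j \<noteq> {} \<and> G v j \<subseteq> in_edges M r d v) \<and>
      (\<forall>j\<in>{1..mm v}. \<forall>k\<in>{1..mm v}. j \<noteq> k \<longrightarrow> G v j \<inter> G v k = {}) \<and>
      (\<Union>j\<in>{1..mm v}. G v j) = in_edges M r d v)"

definition pairing_condition ::
  "'m set \<Rightarrow> ('m \<Rightarrow> 'm) \<Rightarrow> ('m \<Rightarrow> 'm) \<Rightarrow> ('m \<Rightarrow> 'm \<Rightarrow> 'm) \<Rightarrow> ('m \<Rightarrow> nat \<times> nat)
     \<Rightarrow> ('m \<Rightarrow> nat) \<Rightarrow> ('m \<Rightarrow> nat \<Rightarrow> 'm set) \<Rightarrow> bool"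
where
  "pairing_condition M r s cmp d mm G \<longleftrightarrow> (\<forall>v\<in>verts M d.
      \<forall>a\<in>in_edges M r d v. \<forall>f\<in>in_edges M r d v.
        (\<exists>g\<in>edges M d. \<exists>b\<in>edges M d. s a = r g \<and> s f = r b \<and> cmp a g = cmp f b) \<longrightarrow>
        (\<forall>j\<in>{1..mm v}. f \<in> G v j \<longleftrightarrow> a \<in> G v j))"

definition blk :: "('m \<Rightarrow> 'm) \<Rightarrow> ('m \<Rightarrow> nat) \<Rightarrow> ('m \<Rightarrow> nat \<Rightarrow> 'm set) \<Rightarrow> 'm \<Rightarrow> nat" where
  "blk r mm G f = (THE j. j \<in> {1..mm (r f)} \<and> f \<in> G (r f) j)"

text \<open>A path is a pair (v, es): v is its range vertex, es the list of edges e1 ... ek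
(read left to right, composition order) with s(e_i) = r(e_{i+1}) and r(e1) = v.
The empty list gives the vertex path at v.\<close>

type_synonym ('v, 'e) path = "'v \<times> 'e list"

definition valid_path ::
  "'v set \<Rightarrow> 'e set \<Rightarrow> ('e \<Rightarrow> 'v) \<Rightarrow> ('e \<Rightarrow> 'v) \<Rightarrow> ('v, 'e) path \<Rightarrow> bool" where
  "valid_path V E rE sE p \<longleftrightarrow> fst p \<in> V \<and> set (snd p) \<subseteq> E \<and>
     (snd p \<noteq> [] \<longrightarrow> rE (hd (snd p)) = fst p) \<and>
     (\<forall>i. Suc i < length (snd p) \<longrightarrow> sE (snd p ! i) = rE (snd p ! Suc i))"

definition path_src :: "('e \<Rightarrow> 'v) \<Rightarrow> ('v, 'e) path \<Rightarrow> 'v" where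
  "path_src sE p = (if snd p = [] then fst p else sE (last (snd p)))"

definition path_cat :: "('v, 'e) path \<Rightarrow> ('v, 'e) path \<Rightarrow> ('v, 'e) path" where
  "path_cat p q = (fst p, snd p @ snd q)"

definition path_deg :: "('e \<Rightarrow> nat \<times> nat) \<Rightarrow> ('v, 'e) path \<Rightarrow> nat \<times> nat" where
  "path_deg dE p = sum_list (map dE (snd p))"

definition sq_step ::
  "'v set \<Rightarrow> 'e set \<Rightarrow> ('e \<Rightarrow> 'v) \<Rightarrow> ('e \<Rightarrow> 'v) \<Rightarrow> ('e list \<times> 'e list) set
     \<Rightarrow> ('v, 'e) path \<Rightarrow> ('v, 'e) path \<Rightarrow> bool" where
  "sq_step V E rE sE Sq p q \<longleftrightarrow> valid_path V E rE sE p \<and> valid_path V E rE sE q \<and>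
     fst p = fst q \<and>
     (\<exists>xs ys a b. ((a, b) \<in> Sq \<or> (b, a) \<in> Sq) \<and> snd p = xs @ a @ ys \<and> snd q = xs @ b @ ys)"

definition sq_equiv ::
  "'v set \<Rightarrow> 'e set \<Rightarrow> ('e \<Rightarrow> 'v) \<Rightarrow> ('e \<Rightarrow> 'v) \<Rightarrow> ('e list \<times> 'e list) set
     \<Rightarrow> ('v, 'e) path \<Rightarrow> ('v, 'e) path \<Rightarrow> bool" where
  "sq_equiv V E rE sE Sq = (sq_step V E rE sE Sq)\<^sup>*\<^sup>*"

definition pclass ::
  "'v set \<Rightarrow> 'e set \<Rightarrow> ('e \<Rightarrow> 'v) \<Rightarrow> ('e \<Rightarrow> 'v) \<Rightarrow> ('e list \<times> 'e list) set
     \<Rightarrow> ('v, 'e) path \<Rightarrow> ('v, 'e) path set" where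
  "pclass V E rE sE Sq p = {q. sq_equiv V E rE sE Sq p q}"

text \<open>The quotient category G^*/~ : morphisms are equivalence classes of valid paths;
operations are computed on (arbitrary) representatives.\<close>

definition quot_mor ::
  "'v set \<Rightarrow> 'e set \<Rightarrow> ('e \<Rightarrow> 'v) \<Rightarrow> ('e \<Rightarrow> 'v) \<Rightarrow> ('e list \<times> 'e list) set
     \<Rightarrow> ('v, 'e) path set set" where
  "quot_mor V E rE sE Sq = pclass V E rE sE Sq ` {p. valid_path V E rE sE p}"

definition quot_r ::
  "'v set \<Rightarrow> 'e set \<Rightarrow> ('e \<Rightarrow> 'v) \<Rightarrow> ('e \<Rightarrow> 'v) \<Rightarrow> ('e list \<times> 'e list) set
     \<Rightarrow> ('v, 'e) path set \<Rightarrow> ('v, 'e) path set" where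
  "quot_r V E rE sE Sq C = pclass V E rE sE Sq (fst (SOME p. p \<in> C), [])"

definition quot_s ::
  "'v set \<Rightarrow> 'e set \<Rightarrow> ('e \<Rightarrow> 'v) \<Rightarrow> ('e \<Rightarrow> 'v) \<Rightarrow> ('e list \<times> 'e list) set
     \<Rightarrow> ('v, 'e) path set \<Rightarrow> ('v, 'e) path set" where
  "quot_s V E rE sE Sq C = pclass V E rE sE Sq (path_src sE (SOME p. p \<in> C), [])"

definition quot_comp ::
  "'v set \<Rightarrow> 'e set \<Rightarrow> ('e \<Rightarrow> 'v) \<Rightarrow> ('e \<Rightarrow> 'v) \<Rightarrow> ('e list \<times> 'e list) set
     \<Rightarrow> ('v, 'e) path set \<Rightarrow> ('v, 'e) path set \<Rightarrow> ('v, 'e) path set" where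
  "quot_comp V E rE sE Sq C D =
     pclass V E rE sE Sq (path_cat (SOME p. p \<in> C) (SOME q. q \<in> D))"

definition quot_deg ::
  "('e \<Rightarrow> nat \<times> nat) \<Rightarrow> ('v, 'e) path set \<Rightarrow> nat \<times> nat" where
  "quot_deg dE C = path_deg dE (SOME p. p \<in> C)"

text \<open>Vertices v^i and edges f^i are encoded as pairs (v, i) and (f, i).\<close>

definition VI :: "'m set \<Rightarrow> ('m \<Rightarrow> nat \<times> nat) \<Rightarrow> ('m \<Rightarrow> nat) \<Rightarrow> ('m \<times> nat) set" where
  "VI M d mm = {(v, i). v \<in> verts M d \<and> 1 \<le> i \<and> i \<le> mm v}"

definition EI :: "'m set \<Rightarrow> ('m \<Rightarrow> 'm) \<Rightarrow> ('m \<Rightarrow> nat \<times> nat) \<Rightarrow> ('m \<Rightarrow> nat) \<Rightarrow> ('m \<times> nat) set" where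
  "EI M s d mm = {(f, i). f \<in> edges M d \<and> 1 \<le> i \<and> i \<le> mm (s f)}"

definition rI :: "('m \<Rightarrow> 'm) \<Rightarrow> ('m \<Rightarrow> nat) \<Rightarrow> ('m \<Rightarrow> nat \<Rightarrow> 'm set) \<Rightarrow> 'm \<times> nat \<Rightarrow> 'm \<times> nat" where
  "rI r mm G e = (r (fst e), blk r mm G (fst e))"

definition sI :: "('m \<Rightarrow> 'm) \<Rightarrow> 'm \<times> nat \<Rightarrow> 'm \<times> nat" where
  "sI s e = (s (fst e), snd e)"

definition dI :: "('m \<Rightarrow> nat \<times> nat) \<Rightarrow> 'm \<times> nat \<Rightarrow> nat \<times> nat" where
  "dI d e = d (fst e)"

text \<open>f^i g^k ~_I a^j b^k iff g \<in> G^i_{s(f)}, b \<in> G^j_{s(a)} and fg = ab in Lambda.\<close>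
definition SqI ::
  "'m set \<Rightarrow> ('m \<Rightarrow> 'm) \<Rightarrow> ('m \<Rightarrow> 'm) \<Rightarrow> ('m \<Rightarrow> 'm \<Rightarrow> 'm) \<Rightarrow> ('m \<Rightarrow> nat \<times> nat)
     \<Rightarrow> ('m \<Rightarrow> nat) \<Rightarrow> ('m \<Rightarrow> nat \<Rightarrow> 'm set) \<Rightarrow> (('m \<times> nat) list \<times> ('m \<times> nat) list) set"
where
  "SqI M r s cmp d mm G =
     {([(f, i), (g, k)], [(a, j), (b, k)]) | f g a b i j k.
        f \<in> edges M d \<and> g \<in> edges M d \<and> a \<in> edges M d \<and> b \<in> edges M d \<and>
        s f = r g \<and> s a = r b \<and> cmp f g = cmp a b \<and>
        i \<in> {1..mm (s f)} \<and> g \<in> G (s f) i \<and>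
        j \<in> {1..mm (s a)} \<and> b \<in> G (s a) j \<and>
        1 \<le> k \<and> k \<le> mm (s g)}"

end

theory Submission
  imports Defs
begin

text \<open>
  Forgetting the indices and composing in \<open>\<Lambda>\<close> sends a path of \<open>G\<^sub>I\<close> to a morphism of
  \<open>\<Lambda>\<close>, its realisation. The squares of \<open>\<sim>\<^sub>I\<close> realise to commuting squares of
  \<open>\<Lambda>\<close>, so the realisation and the (indexed) source vertex of a path are invariants of
  \<open>\<sim>\<^sub>I\<close>. They are complete invariants, by induction on the length: if two such paths
  start with different edges \<open>f \<noteq> f'\<close>, unique factorisation in \<open>\<Lambda>\<close> writes their
  realisations as \<open>f b \<rho> = f' g \<rho>\<close> with edges \<open>b, g\<close>; lifting \<open>\<rho>\<close> to \<open>G\<^sub>I\<close>, the two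
  paths are equivalent to \<open>f\<^sup>i b\<^sup>j \<rho>\<^sub>I\<close> and \<open>f'\<^sup>k g\<^sup>j \<rho>\<^sub>I\<close>, and the pairing condition
  puts \<open>f\<close> and \<open>f'\<close> into the same block, so that these two differ by one square of
  \<open>\<sim>\<^sub>I\<close>. Hence morphisms of \<open>\<Lambda>\<^sub>I\<close> are pairs of a morphism \<open>\<lambda>\<close> of \<open>\<Lambda>\<close> and an index at
  \<open>s(\<lambda>)\<close>, and unique factorisation in \<open>\<Lambda>\<^sub>I\<close> is inherited from \<open>\<Lambda>\<close>. The category
  axioms hold for the quotient of any path category by parallel squares of equal degree.
\<close>

section \<open>2-graphs\<close>

lemma verts_iff: "v \<in> verts M d \<longleftrightarrow> v \<in> M \<and> d v = 0"
  by (simp add: verts_def deg_set_def zero_prod_def)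

lemma edges_iff: "f \<in> edges M d \<longleftrightarrow> f \<in> M \<and> (d f = (1, 0) \<or> d f = (0, 1))"
  by (auto simp: edges_def deg_set_def)

lemma unit_degrees_swap:
  fixes a a' m m' :: "nat \<times> nat"
  assumes "a \<in> {(1, 0), (0, 1)}" "a' \<in> {(1, 0), (0, 1)}" "a \<noteq> a'" "a + m = a' + m'"
  shows "\<exists>t. m = a' + t \<and> m' = a + t"
  using assms by (intro exI[of _ "m - a'"]) (cases m; cases m'; auto)

locale two_graph =
  fixes M :: "'m set" and r s :: "'m \<Rightarrow> 'm" and cmp :: "'m \<Rightarrow> 'm \<Rightarrow> 'm"
    and d :: "'m \<Rightarrow> nat \<times> nat"
  assumes is_2graph: "is_2graph M r s cmp d"
begin

lemma r_in: "x \<in> M \<Longrightarrow> r x \<in> M"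
  and s_in: "x \<in> M \<Longrightarrow> s x \<in> M"
  and r_s: "x \<in> M \<Longrightarrow> r (s x) = s x"
  and s_r: "x \<in> M \<Longrightarrow> s (r x) = r x"
  using is_2graph unfolding is_2graph_def by blast+

lemma cmp_in: "x \<in> M \<Longrightarrow> y \<in> M \<Longrightarrow> s x = r y \<Longrightarrow> cmp x y \<in> M"
  and r_cmp: "x \<in> M \<Longrightarrow> y \<in> M \<Longrightarrow> s x = r y \<Longrightarrow> r (cmp x y) = r x"
  and s_cmp: "x \<in> M \<Longrightarrow> y \<in> M \<Longrightarrow> s x = r y \<Longrightarrow> s (cmp x y) = s y"
  and d_cmp: "x \<in> M \<Longrightarrow> y \<in> M \<Longrightarrow> s x = r y \<Longrightarrow> d (cmp x y) = d x + d y"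
  using is_2graph unfolding is_2graph_def by blast+

lemma cmp_assoc:
  "x \<in> M \<Longrightarrow> y \<in> M \<Longrightarrow> z \<in> M \<Longrightarrow> s x = r y \<Longrightarrow> s y = r z \<Longrightarrow>
    cmp (cmp x y) z = cmp x (cmp y z)"
  using is_2graph unfolding is_2graph_def by blast

lemma cmp_r_left: "x \<in> M \<Longrightarrow> cmp (r x) x = x"
  and cmp_s_right: "x \<in> M \<Longrightarrow> cmp x (s x) = x"
  and d_r: "x \<in> M \<Longrightarrow> d (r x) = 0"
  using is_2graph unfolding is_2graph_def by blast+

lemma d_s: "x \<in> M \<Longrightarrow> d (s x) = 0"
  by (metis d_r r_s s_in)

lemma r_in_verts: "x \<in> M \<Longrightarrow> r x \<in> verts M d"
  and s_in_verts: "x \<in> M \<Longrightarrow> s x \<in> verts M d"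
  by (simp_all add: verts_iff r_in s_in d_r d_s)

lemma factorization_ex1:
  "x \<in> M \<Longrightarrow> d x = m + n \<Longrightarrow> \<exists>!p. fst p \<in> M \<and> snd p \<in> M \<and> s (fst p) = r (snd p) \<and>
    d (fst p) = m \<and> d (snd p) = n \<and> cmp (fst p) (snd p) = x"
  using is_2graph unfolding is_2graph_def by blast

lemma factorization_exists:
  assumes "x \<in> M" "d x = m + n"
  obtains \<mu> \<nu> where "\<mu> \<in> M" "\<nu> \<in> M" "s \<mu> = r \<nu>" "d \<mu> = m" "d \<nu> = n" "cmp \<mu> \<nu> = x"
  using factorization_ex1[OF assms] by blast

lemma factorization_unique:
  assumes "\<mu> \<in> M" "\<nu> \<in> M" "s \<mu> = r \<nu>" "\<mu>' \<in> M" "\<nu>' \<in> M" "s \<mu>' = r \<nu>'"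
    and eq: "cmp \<mu> \<nu> = cmp \<mu>' \<nu>'" and deg: "d \<mu> = d \<mu>'"
  shows "\<mu> = \<mu>' \<and> \<nu> = \<nu>'"
proof -
  let ?x = "cmp \<mu> \<nu>"
  have x: "?x \<in> M" "d ?x = d \<mu> + d \<nu>"
    using assms(1-3) by (simp_all add: cmp_in d_cmp)
  have "d ?x = d \<mu> + d \<nu>'"
    unfolding eq deg using assms(4-6) by (rule d_cmp)
  then have "d \<nu>' = d \<nu>"
    using x by simp
  then have "(\<mu>, \<nu>) = (\<mu>', \<nu>')"
    using factorization_ex1[OF x] assms unfolding Ex1_def by auto
  then show ?thesis by simp
qed

lemma degree_zero_endpoints:
  assumes "x \<in> M" "d x = 0"
  shows "r x = x \<and> s x = x"
  using factorization_unique[of "r x" x x "s x"] assms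
  by (simp add: r_in s_in r_s s_r cmp_r_left cmp_s_right d_r)

lemma first_edge_factorization:
  assumes "x \<in> M" "d x \<noteq> 0"
  obtains f y where "f \<in> edges M d" "y \<in> M" "s f = r y" "cmp f y = x"
proof -
  obtain e where "e \<in> {(1, 0), (0, 1)}" "d x = e + (d x - e)"
  proof (cases "fst (d x) = 0")
    case True
    with assms(2) have "d x = (0, 1) + (d x - (0, 1))"
      by (cases "d x") (auto simp: zero_prod_def)
    then show thesis by (rule that[rotated]) simp
  next
    case False
    then have "d x = (1, 0) + (d x - (1, 0))"
      by (cases "d x") auto
    then show thesis by (rule that[rotated]) simp
  qed
  with factorization_exists[OF assms(1) this(2)] that show thesis
    by (auto simp: edges_iff)
qed

lemma distinct_first_edges_square:
  assumes f: "f \<in> edges M d" and f': "f' \<in> edges M d" and "f \<noteq> f'"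
    and \<mu>: "\<mu> \<in> M" "s f = r \<mu>" and \<mu>': "\<mu>' \<in> M" "s f' = r \<mu>'"
    and eq: "cmp f \<mu> = cmp f' \<mu>'"
  obtains b g \<rho> where "b \<in> edges M d" "g \<in> edges M d" "\<rho> \<in> M"
    "s f = r b" "s f' = r g" "s b = r \<rho>" "s g = r \<rho>"
    "cmp f b = cmp f' g" "\<mu> = cmp b \<rho>" "\<mu>' = cmp g \<rho>"
proof -
  have fM: "f \<in> M" "f' \<in> M" and units: "d f \<in> {(1, 0), (0, 1)}" "d f' \<in> {(1, 0), (0, 1)}"
    using f f' by (auto simp: edges_iff)
  have "d f \<noteq> d f'"
    using factorization_unique[of f \<mu> f' \<mu>'] fM \<mu> \<mu>' eq \<open>f \<noteq> f'\<close> by blast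
  moreover have "d f + d \<mu> = d f' + d \<mu>'"
    using eq fM \<mu> \<mu>' by (metis d_cmp)
  ultimately obtain t where t: "d \<mu> = d f' + t" "d \<mu>' = d f + t"
    using unit_degrees_swap units by blast
  obtain g \<rho> where g\<rho>: "g \<in> M" "\<rho> \<in> M" "s g = r \<rho>" "d g = d f" "cmp g \<rho> = \<mu>'"
    using factorization_exists[OF \<mu>'(1) t(2)] by blast
  have g: "g \<in> edges M d" "s f' = r g"
    using g\<rho> units \<mu>' fM by (auto simp: edges_iff r_cmp)
  have "d (cmp f' g) = d f + d f'"
    using g fM g\<rho> by (simp add: d_cmp add.commute)
  then obtain h b where hb: "h \<in> M" "b \<in> M" "s h = r b" "d h = d f" "d b = d f'"
      "cmp h b = cmp f' g"
    using factorization_exists[of "cmp f' g"] g fM g\<rho> cmp_in by metis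
  have sb: "s b = r \<rho>"
    using hb g g\<rho> fM by (metis s_cmp)
  have "cmp f \<mu> = cmp h (cmp b \<rho>)"
    using eq g\<rho> g hb sb fM by (metis cmp_assoc)
  then have "f = h \<and> \<mu> = cmp b \<rho>"
    using factorization_unique[of f \<mu> h "cmp b \<rho>"] fM \<mu> hb sb g\<rho>
    by (simp add: cmp_in r_cmp)
  moreover have "b \<in> edges M d"
    using hb units by (simp add: edges_iff)
  ultimately show thesis
    using that hb g g\<rho> sb by metis
qed

end

section \<open>Quotients of path categories by commuting squares\<close>

lemma valid_path_Nil [simp]: "valid_path V E rE sE (v, []) \<longleftrightarrow> v \<in> V"
  by (simp add: valid_path_def)

lemma path_src_Nil [simp]: "path_src sE (v, []) = v"
  and path_src_Cons [simp]: "path_src sE (v, e # es) = path_src sE (sE e, es)"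
  by (simp_all add: path_src_def)

lemma fst_path_cat [simp]: "fst (path_cat p q) = fst p"
  by (simp add: path_cat_def)

lemma path_cat_assoc: "path_cat (path_cat p q) t = path_cat p (path_cat q t)"
  by (simp add: path_cat_def)

lemma path_cat_Nil_left [simp]: "path_cat (fst p, []) p = p"
  and path_cat_Nil_right [simp]: "path_cat p (v, []) = p"
  by (simp_all add: path_cat_def)

lemma path_src_cat: "path_src sE p = fst q \<Longrightarrow> path_src sE (path_cat p q) = path_src sE q"
  by (cases q) (auto simp: path_src_def path_cat_def)

lemma path_deg_cat: "path_deg dE (path_cat p q) = path_deg dE p + path_deg dE q"
  by (simp add: path_deg_def path_cat_def)

lemma sq_step_sym: "sq_step V E rE sE Sq p q \<Longrightarrow> sq_step V E rE sE Sq q p"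
  unfolding sq_step_def by metis

lemma sq_equiv_refl [simp]: "sq_equiv V E rE sE Sq p p"
  by (simp add: sq_equiv_def)

lemma sq_equiv_sym: "sq_equiv V E rE sE Sq p q \<Longrightarrow> sq_equiv V E rE sE Sq q p"
  unfolding sq_equiv_def
  by (induction rule: rtranclp_induct) (auto intro: converse_rtranclp_into_rtranclp sq_step_sym)

lemma sq_equiv_trans:
  "sq_equiv V E rE sE Sq p q \<Longrightarrow> sq_equiv V E rE sE Sq q t \<Longrightarrow> sq_equiv V E rE sE Sq p t"
  unfolding sq_equiv_def by (rule rtranclp_trans)

lemma sq_equiv_if_step: "sq_step V E rE sE Sq p q \<Longrightarrow> sq_equiv V E rE sE Sq p q"
  by (simp add: sq_equiv_def)

lemma sq_equiv_invariant:
  assumes "\<And>p q. sq_step V E rE sE Sq p q \<Longrightarrow> f p = f q" and "sq_equiv V E rE sE Sq p q"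
  shows "f p = f q"
  using assms(2) unfolding sq_equiv_def
  by (induction rule: rtranclp_induct) (auto dest: assms(1))

lemma sq_equiv_valid:
  "sq_equiv V E rE sE Sq p q \<Longrightarrow> valid_path V E rE sE p \<Longrightarrow> valid_path V E rE sE q"
  unfolding sq_equiv_def sq_step_def by (induction rule: rtranclp_induct) auto

lemma sq_equiv_fst: "sq_equiv V E rE sE Sq p q \<Longrightarrow> fst p = fst q"
  using sq_equiv_invariant[where f = fst] unfolding sq_step_def by blast

lemma pclass_eq_iff: "pclass V E rE sE Sq p = pclass V E rE sE Sq q \<longleftrightarrow> sq_equiv V E rE sE Sq p q"
  unfolding pclass_def by (auto intro: sq_equiv_sym sq_equiv_trans)

lemma sq_equiv_some_pclass: "sq_equiv V E rE sE Sq p (SOME q. q \<in> pclass V E rE sE Sq p)"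
  using someI[of "\<lambda>q. q \<in> pclass V E rE sE Sq p" p] by (simp add: pclass_def)

locale commuting_squares =
  fixes V :: "'v set" and E :: "'e set" and rE sE :: "'e \<Rightarrow> 'v" and dE :: "'e \<Rightarrow> nat \<times> nat"
    and Sq :: "('e list \<times> 'e list) set"
  assumes rE_in: "e \<in> E \<Longrightarrow> rE e \<in> V" and sE_in: "e \<in> E \<Longrightarrow> sE e \<in> V"
    and square_nonempty: "(a, b) \<in> Sq \<Longrightarrow> a \<noteq> [] \<and> b \<noteq> []"
    and square_src: "(a, b) \<in> Sq \<Longrightarrow> sE (last a) = sE (last b)"
    and square_deg: "(a, b) \<in> Sq \<Longrightarrow> sum_list (map dE a) = sum_list (map dE b)"
begin

abbreviation "valid \<equiv> valid_path V E rE sE"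
abbreviation "psrc \<equiv> path_src sE"
abbreviation "pdeg \<equiv> path_deg dE"
abbreviation "step \<equiv> sq_step V E rE sE Sq"
abbreviation "eqv \<equiv> sq_equiv V E rE sE Sq"
abbreviation "cls \<equiv> pclass V E rE sE Sq"

lemma valid_path_fst: "valid p \<Longrightarrow> fst p \<in> V"
  and valid_path_edges: "valid p \<Longrightarrow> set (snd p) \<subseteq> E"
  by (simp_all add: valid_path_def)

lemma valid_path_Cons [simp]: "valid (v, e # es) \<longleftrightarrow> v = rE e \<and> e \<in> E \<and> valid (sE e, es)"
proof -
  have "(\<forall>i. Suc i < length (e # es) \<longrightarrow> sE ((e # es) ! i) = rE ((e # es) ! Suc i)) \<longleftrightarrow>
      (es \<noteq> [] \<longrightarrow> rE (hd es) = sE e) \<and>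
      (\<forall>i. Suc i < length es \<longrightarrow> sE (es ! i) = rE (es ! Suc i))"
    by (auto simp: hd_conv_nth nth_Cons split: nat.split)
  then show ?thesis
    unfolding valid_path_def using rE_in sE_in by auto
qed

lemma valid_path_append:
  "valid (v, xs @ ys) \<longleftrightarrow> valid (v, xs) \<and> valid (psrc (v, xs), ys)"
  by (induction xs arbitrary: v) (auto dest: valid_path_fst)

lemma valid_path_cat: "valid p \<Longrightarrow> valid q \<Longrightarrow> psrc p = fst q \<Longrightarrow> valid (path_cat p q)"
  by (cases p; cases q) (simp add: path_cat_def valid_path_append)

lemma path_src_in:
  assumes "valid p"
  shows "psrc p \<in> V"
proof -
  have "valid (v, es) \<Longrightarrow> psrc (v, es) \<in> V" for v es
    by (induction es arbitrary: v) auto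
  with assms show ?thesis
    by (cases p) simp
qed

lemma sq_step_path_src: "step p q \<Longrightarrow> psrc p = psrc q"
  using square_nonempty square_src unfolding sq_step_def
  by (auto simp: path_src_def last_append)

lemma sq_step_path_deg: "step p q \<Longrightarrow> pdeg p = pdeg q"
  using square_deg unfolding sq_step_def
  by (auto simp: path_deg_def)

lemma sq_equiv_path_src: "eqv p q \<Longrightarrow> psrc p = psrc q"
  by (rule sq_equiv_invariant[OF sq_step_path_src])

lemma sq_equiv_path_deg: "eqv p q \<Longrightarrow> pdeg p = pdeg q"
  by (rule sq_equiv_invariant[OF sq_step_path_deg])

lemma sq_step_cat_right:
  assumes "step p p'" "valid q" "psrc p = fst q"
  shows "step (path_cat p q) (path_cat p' q)"
proof -
  from assms(1) obtain xs ys a b where "valid p" "valid p'" "fst p = fst p'"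
    "(a, b) \<in> Sq \<or> (b, a) \<in> Sq" "snd p = xs @ a @ ys" "snd p' = xs @ b @ ys"
    unfolding sq_step_def by blast
  moreover have "psrc p' = fst q"
    using sq_step_path_src[OF assms(1)] assms(3) by simp
  ultimately show ?thesis
    unfolding sq_step_def using assms
    by (intro conjI valid_path_cat exI[of _ xs] exI[of _ "ys @ snd q"] exI[of _ a] exI[of _ b])
      (auto simp: path_cat_def)
qed

lemma sq_step_cat_left:
  assumes "step q q'" "valid p" "psrc p = fst q"
  shows "step (path_cat p q) (path_cat p q')"
proof -
  from assms(1) obtain xs ys a b where "valid q" "valid q'" "fst q = fst q'"
    "(a, b) \<in> Sq \<or> (b, a) \<in> Sq" "snd q = xs @ a @ ys" "snd q' = xs @ b @ ys"
    unfolding sq_step_def by blast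
  then show ?thesis
    unfolding sq_step_def using assms
    by (intro conjI valid_path_cat exI[of _ "snd p @ xs"] exI[of _ ys] exI[of _ a] exI[of _ b])
      (auto simp: path_cat_def)
qed

lemma sq_equiv_cat:
  assumes "eqv p p'" "eqv q q'" "valid p" "valid q" "psrc p = fst q"
  shows "eqv (path_cat p q) (path_cat p' q')"
proof -
  have "step\<^sup>*\<^sup>* (path_cat p q) (path_cat p' q)"
    using assms(1) unfolding sq_equiv_def
  proof (induction rule: rtranclp_induct)
    case (step y z)
    have "psrc y = fst q"
      using sq_equiv_path_src[OF step.hyps(1)[folded sq_equiv_def]] assms(5) by simp
    with step.IH sq_step_cat_right[OF step.hyps(2) assms(4)] show ?case
      by (simp add: rtranclp.rtrancl_into_rtrancl)
  qed simp
  moreover have "step\<^sup>*\<^sup>* (path_cat p' q) (path_cat p' q')"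
    using assms(2) unfolding sq_equiv_def
  proof (induction rule: rtranclp_induct)
    case (step y z)
    have "valid p'" "psrc p' = fst y"
      using sq_equiv_valid[OF assms(1,3)] sq_equiv_path_src[OF assms(1)] assms(5)
        sq_equiv_fst[OF step.hyps(1)[folded sq_equiv_def]] by simp_all
    then show ?case
      using step.IH sq_step_cat_left[OF step.hyps(2)] by (simp add: rtranclp.rtrancl_into_rtrancl)
  qed simp
  ultimately show ?thesis
    unfolding sq_equiv_def by (rule rtranclp_trans)
qed

lemma quot_r_pclass [simp]: "quot_r V E rE sE Sq (cls p) = cls (fst p, [])"
  unfolding quot_r_def using sq_equiv_fst[OF sq_equiv_some_pclass[of V E rE sE Sq p]] by simp

lemma quot_s_pclass [simp]: "quot_s V E rE sE Sq (cls p) = cls (psrc p, [])"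
  unfolding quot_s_def using sq_equiv_path_src[OF sq_equiv_some_pclass[of V E rE sE Sq p]] by simp

lemma quot_deg_pclass [simp]: "quot_deg dE (cls p) = pdeg p"
  unfolding quot_deg_def using sq_equiv_path_deg[OF sq_equiv_some_pclass[of V E rE sE Sq p]] by simp

lemma quot_comp_pclass:
  assumes "valid p" "valid q" "psrc p = fst q"
  shows "quot_comp V E rE sE Sq (cls p) (cls q) = cls (path_cat p q)"
  unfolding quot_comp_def pclass_eq_iff
  using sq_equiv_cat[OF sq_equiv_some_pclass sq_equiv_some_pclass assms] sq_equiv_sym
  by blast

lemma vertex_pclass_eq_iff: "cls (u, []) = cls (v, []) \<longleftrightarrow> u = v"
  using sq_equiv_fst[of V E rE sE Sq "(u, [])" "(v, [])"] by (auto simp: pclass_eq_iff)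

lemma quot_mor_iff: "x \<in> quot_mor V E rE sE Sq \<longleftrightarrow> (\<exists>p. valid p \<and> x = cls p)"
  by (auto simp: quot_mor_def)

lemma pclass_in_quot_mor: "valid p \<Longrightarrow> cls p \<in> quot_mor V E rE sE Sq"
  by (auto simp: quot_mor_def)

abbreviation "QM \<equiv> quot_mor V E rE sE Sq"
abbreviation "QR \<equiv> quot_r V E rE sE Sq"
abbreviation "QS \<equiv> quot_s V E rE sE Sq"
abbreviation "QC \<equiv> quot_comp V E rE sE Sq"
abbreviation "QD \<equiv> quot_deg dE"

lemma quot_mor_cases:
  assumes "x \<in> QM"
  obtains p where "valid p" "x = cls p"
  using assms unfolding quot_mor_iff by blast

end

locale unique_path_factorization = commuting_squares +
  assumes countable_V: "countable V" and countable_E: "countable E"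
    and factor_path: "valid p \<Longrightarrow> pdeg p = m + n \<Longrightarrow>
      \<exists>p1 p2. valid p1 \<and> valid p2 \<and> psrc p1 = fst p2 \<and> pdeg p1 = m \<and> eqv p (path_cat p1 p2)"
    and factor_path_unique: "valid p1 \<Longrightarrow> valid p2 \<Longrightarrow> valid q1 \<Longrightarrow> valid q2 \<Longrightarrow>
      psrc p1 = fst p2 \<Longrightarrow> psrc q1 = fst q2 \<Longrightarrow> pdeg p1 = pdeg q1 \<Longrightarrow>
      eqv (path_cat p1 p2) (path_cat q1 q2) \<Longrightarrow> eqv p1 q1 \<and> eqv p2 q2"
begin

lemma quot_factorization:
  assumes "valid p" "pdeg p = m + n"
  shows "\<exists>!y. fst y \<in> QM \<and> snd y \<in> QM \<and> QS (fst y) = QR (snd y) \<and>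
    QD (fst y) = m \<and> QD (snd y) = n \<and> QC (fst y) (snd y) = cls p"
proof (rule ex_ex1I)
  obtain p1 p2 where p12: "valid p1" "valid p2" "psrc p1 = fst p2" "pdeg p1 = m"
    and eq: "eqv p (path_cat p1 p2)"
    using factor_path[OF assms] by blast
  have "pdeg p2 = n"
    using sq_equiv_path_deg[OF eq] assms(2) p12 by (simp add: path_deg_cat)
  then show "\<exists>y. fst y \<in> QM \<and> snd y \<in> QM \<and> QS (fst y) = QR (snd y) \<and>
      QD (fst y) = m \<and> QD (snd y) = n \<and> QC (fst y) (snd y) = cls p"
    using p12 sq_equiv_sym[OF eq]
    by (intro exI[of _ "(cls p1, cls p2)"]) (simp add: pclass_in_quot_mor quot_comp_pclass pclass_eq_iff)
next
  fix y z
  assume y: "fst y \<in> QM \<and> snd y \<in> QM \<and> QS (fst y) = QR (snd y) \<and>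
      QD (fst y) = m \<and> QD (snd y) = n \<and> QC (fst y) (snd y) = cls p"
    and z: "fst z \<in> QM \<and> snd z \<in> QM \<and> QS (fst z) = QR (snd z) \<and>
      QD (fst z) = m \<and> QD (snd z) = n \<and> QC (fst z) (snd z) = cls p"
  obtain p1 p2 q1 q2 where pq: "valid p1" "valid p2" "valid q1" "valid q2"
    "y = (cls p1, cls p2)" "z = (cls q1, cls q2)"
  proof -
    from y z obtain p1 p2 q1 q2 where "valid p1" "valid p2" "valid q1" "valid q2"
      "fst y = cls p1" "snd y = cls p2" "fst z = cls q1" "snd z = cls q2"
      unfolding quot_mor_iff by blast
    then show thesis
      by (intro that[of p1 p2 q1 q2]) (simp_all add: prod_eq_iff)
  qed
  have c: "psrc p1 = fst p2" "psrc q1 = fst q2"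
    using y z pq(5,6) by (simp_all add: vertex_pclass_eq_iff)
  have "cls (path_cat p1 p2) = cls (path_cat q1 q2)"
    using y z pq(5,6) by (simp add: quot_comp_pclass pq(1-4) c)
  then have "eqv p1 q1 \<and> eqv p2 q2"
    using y z pq c by (intro factor_path_unique) (simp_all add: pclass_eq_iff)
  with \<open>y = _\<close> \<open>z = _\<close> show "y = z"
    by (simp add: pclass_eq_iff)
qed

theorem is_2graph_quotient: "is_2graph QM QR QS QC QD"
  unfolding is_2graph_def
proof (intro conjI ballI allI impI)
  have "p \<in> V \<times> lists E" if "valid p" for p
    using valid_path_fst[OF that] valid_path_edges[OF that] by (simp add: mem_Times_iff lists_eq_set)
  then have "{p. valid p} \<subseteq> V \<times> lists E"
    by blast
  then have "countable {p. valid p}"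
    by (rule countable_subset) (simp add: countable_V countable_E)
  then show "countable QM"
    unfolding quot_mor_def by (rule countable_image)
next
  fix x assume "x \<in> QM"
  then obtain p where p: "valid p" "x = cls p"
    by (rule quot_mor_cases)
  then have ends: "valid (fst p, [])" "valid (psrc p, [])"
    by (simp_all add: valid_path_def path_src_in)
  with p show "QR x \<in> QM" "QS x \<in> QM" "QR (QR x) = QR x" "QS (QR x) = QR x"
    "QR (QS x) = QS x" "QS (QS x) = QS x" "QD (QR x) = 0"
    by (simp_all add: pclass_in_quot_mor path_deg_def)
  from p ends show "QC (QR x) x = x" "QC x (QS x) = x"
    by (simp_all add: quot_comp_pclass)
next
  fix x y assume "x \<in> QM" "y \<in> QM" and xy: "QS x = QR y"
  then obtain p q where pq: "valid p" "valid q" "x = cls p" "y = cls q"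
    by (meson quot_mor_cases)
  with xy have "psrc p = fst q"
    by (simp add: vertex_pclass_eq_iff)
  with pq show "QC x y \<in> QM" "QR (QC x y) = QR x" "QS (QC x y) = QS y"
    "QD (QC x y) = QD x + QD y"
    by (simp_all add: quot_comp_pclass pclass_in_quot_mor valid_path_cat path_src_cat path_deg_cat)
next
  fix x y z assume "x \<in> QM" "y \<in> QM" "z \<in> QM" and xyz: "QS x = QR y \<and> QS y = QR z"
  then obtain p q t where pqt: "valid p" "valid q" "valid t" "x = cls p" "y = cls q" "z = cls t"
    by (meson quot_mor_cases)
  with xyz have "psrc p = fst q" "psrc q = fst t"
    by (simp_all add: vertex_pclass_eq_iff)
  with pqt show "QC (QC x y) z = QC x (QC y z)"
    by (simp add: quot_comp_pclass valid_path_cat path_src_cat path_cat_assoc)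
next
  fix x m n assume x: "x \<in> QM" and deg: "QD x = m + n"
  from x obtain p where p: "valid p" "x = cls p"
    by (rule quot_mor_cases)
  with deg have "pdeg p = m + n"
    by simp
  with p(1) show "\<exists>!y. fst y \<in> QM \<and> snd y \<in> QM \<and> QS (fst y) = QR (snd y) \<and>
      QD (fst y) = m \<and> QD (snd y) = n \<and> QC (fst y) (snd y) = x"
    unfolding p(2) by (rule quot_factorization)
qed

end

section \<open>The insplit graph\<close>

lemma VI_iff: "(v, i) \<in> VI M d mm \<longleftrightarrow> v \<in> verts M d \<and> 1 \<le> i \<and> i \<le> mm v"
  by (simp add: VI_def)

lemma EI_iff: "(f, i) \<in> EI M s d mm \<longleftrightarrow> f \<in> edges M d \<and> 1 \<le> i \<and> i \<le> mm (s f)"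
  by (simp add: EI_def)

lemma rI_Pair [simp]: "rI r mm G (f, i) = (r f, blk r mm G f)"
  and sI_Pair [simp]: "sI s (f, i) = (s f, i)"
  and dI_Pair [simp]: "dI d (f, i) = d f"
  by (simp_all add: rI_def sI_def dI_def)

lemma SqI_cases:
  assumes "(a, b) \<in> SqI M r s cmp d mm G"
  obtains f g f' g' i j k where "a = [(f, i), (g, k)]" "b = [(f', j), (g', k)]"
    "f \<in> edges M d" "g \<in> edges M d" "f' \<in> edges M d" "g' \<in> edges M d"
    "s f = r g" "s f' = r g'" "cmp f g = cmp f' g'"
  using assms unfolding SqI_def by blast

locale insplitting = two_graph M r s cmp d
  for M :: "'m set" and r s :: "'m \<Rightarrow> 'm" and cmp and d +
  fixes mm :: "'m \<Rightarrow> nat" and G :: "'m \<Rightarrow> nat \<Rightarrow> 'm set"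
  assumes partition: "insplit_partition M r d mm G"
    and pairing: "pairing_condition M r s cmp d mm G"
begin

abbreviation block :: "'m \<Rightarrow> nat" where
  "block \<equiv> blk r mm G"

lemma block_unique:
  assumes "f \<in> edges M d"
  shows "\<exists>!j. j \<in> {1..mm (r f)} \<and> f \<in> G (r f) j"
proof -
  have "r f \<in> verts M d" "f \<in> in_edges M r d (r f)"
    using assms by (auto simp: edges_iff r_in_verts in_edges_def)
  with partition show ?thesis
    unfolding insplit_partition_def by blast
qed

lemma block_mem: "f \<in> edges M d \<Longrightarrow> block f \<in> {1..mm (r f)} \<and> f \<in> G (r f) (block f)"
  unfolding blk_def by (rule theI'[OF block_unique])

lemma block_eq: "f \<in> edges M d \<Longrightarrow> j \<in> {1..mm (r f)} \<Longrightarrow> f \<in> G (r f) j \<Longrightarrow> block f = j"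
  unfolding blk_def by (rule the1_equality[OF block_unique]) simp_all

lemma block_eq_if_square:
  assumes f: "f \<in> edges M d" and f': "f' \<in> edges M d" and "b \<in> edges M d" "g \<in> edges M d"
    and "s f = r b" "s f' = r g" and eq: "cmp f b = cmp f' g"
  shows "r f = r f' \<and> block f = block f'"
proof -
  have M: "f \<in> M" "f' \<in> M" "b \<in> M" "g \<in> M"
    using assms by (simp_all add: edges_iff)
  have r: "r f = r f'"
    using r_cmp[of f b] r_cmp[of f' g] M assms by simp
  have "r f \<in> verts M d" "f \<in> in_edges M r d (r f)" "f' \<in> in_edges M r d (r f)"
    using f f' r M by (simp_all add: r_in_verts in_edges_def)
  with pairing assms have "\<forall>j\<in>{1..mm (r f)}. f' \<in> G (r f) j \<longleftrightarrow> f \<in> G (r f) j"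
    unfolding pairing_condition_def by blast
  then have "block f' = block f"
    using block_mem[OF f] block_eq[OF f'] r by simp
  with r show ?thesis by simp
qed

sublocale commuting_squares "VI M d mm" "EI M s d mm" "rI r mm G" "sI s" "dI d"
  "SqI M r s cmp d mm G"
proof
  fix e assume "e \<in> EI M s d mm"
  then show "rI r mm G e \<in> VI M d mm" "sI s e \<in> VI M d mm"
    using block_mem[of "fst e"]
    by (auto simp: EI_def VI_def rI_def sI_def edges_iff r_in_verts s_in_verts)
next
  fix a b assume "(a, b) \<in> SqI M r s cmp d mm G"
  then obtain f g f' g' i j k where ab: "a = [(f, i), (g, k)]" "b = [(f', j), (g', k)]"
    and M: "f \<in> M" "g \<in> M" "f' \<in> M" "g' \<in> M"
    and comp: "s f = r g" "s f' = r g'" "cmp f g = cmp f' g'"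
    by (elim SqI_cases) (auto simp: edges_iff)
  show "a \<noteq> [] \<and> b \<noteq> []"
    using ab by simp
  show "sI s (last a) = sI s (last b)"
    using ab M comp s_cmp[of f g] s_cmp[of f' g'] by simp
  show "sum_list (map (dI d) a) = sum_list (map (dI d) b)"
    using ab M comp d_cmp[of f g] d_cmp[of f' g'] by simp
qed

fun realise :: "('m \<times> nat, 'm \<times> nat) path \<Rightarrow> 'm" where
  "realise (v, []) = fst v"
| "realise (v, e # es) = cmp (fst e) (realise (sI s e, es))"

lemma realise_morphism:
  "valid p \<Longrightarrow> realise p \<in> M \<and> r (realise p) = fst (fst p) \<and>
    s (realise p) = fst (psrc p) \<and> d (realise p) = pdeg p"
proof (induction p rule: realise.induct)
  case (1 v)
  then have "fst v \<in> verts M d"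
    by (cases v) (simp add: VI_iff)
  then have "fst v \<in> M" "d (fst v) = 0"
    by (simp_all add: verts_iff)
  then show ?case
    using degree_zero_endpoints by (simp add: path_deg_def)
next
  case (2 v e es)
  then obtain f i where e: "e = (f, i)" "f \<in> M" "v = rI r mm G e"
    and IH: "realise (sI s e, es) \<in> M" "r (realise (sI s e, es)) = s f"
      "s (realise (sI s e, es)) = fst (psrc (sI s e, es))"
      "d (realise (sI s e, es)) = pdeg (sI s e, es)"
    by (cases e) (auto simp: EI_iff edges_iff)
  then show ?case
    by (simp add: cmp_in r_cmp s_cmp d_cmp path_deg_def)
qed

lemma realise_in: "valid p \<Longrightarrow> realise p \<in> M"
  and r_realise: "valid p \<Longrightarrow> r (realise p) = fst (fst p)"
  and s_realise: "valid p \<Longrightarrow> s (realise p) = fst (psrc p)"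
  and d_realise: "valid p \<Longrightarrow> d (realise p) = pdeg p"
  using realise_morphism by simp_all

lemma realise_append:
  "valid (v, xs @ ys) \<Longrightarrow>
    realise (v, xs @ ys) = cmp (realise (v, xs)) (realise (psrc (v, xs), ys))"
proof (induction xs arbitrary: v)
  case Nil
  then show ?case
    using realise_in[OF Nil.prems] r_realise[OF Nil.prems] cmp_r_left[of "realise (v, ys)"] by simp
next
  case (Cons e xs)
  then obtain f i where e: "e = (f, i)" "f \<in> M" and tail: "valid (sI s e, xs @ ys)"
    by (cases e) (auto simp: EI_iff edges_iff)
  then have "valid (sI s e, xs)" "valid (psrc (sI s e, xs), ys)"
    by (simp_all add: valid_path_append)
  with e Cons.IH[OF tail] show ?case
    using realise_in r_realise s_realise by (simp add: cmp_assoc)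
qed

lemma realise_cat:
  assumes "valid p" "valid q" "psrc p = fst q"
  shows "realise (path_cat p q) = cmp (realise p) (realise q)"
  using realise_append[of "fst p" "snd p" "snd q"] valid_path_cat[OF assms] assms(3)
  by (simp add: path_cat_def)

lemma path_length: "valid p \<Longrightarrow> length (snd p) = fst (pdeg p) + snd (pdeg p)"
proof (induction p rule: realise.induct)
  case (2 v e es)
  then show ?case
    by (cases e) (auto simp: EI_iff edges_iff path_deg_def)
qed (simp add: path_deg_def)

lemma realise_square: "(a, b) \<in> SqI M r s cmp d mm G \<Longrightarrow> realise (v, a) = realise (w, b)"
  by (elim SqI_cases) (auto simp: edges_iff cmp_s_right)

lemma sq_step_realise:
  assumes "step p q"
  shows "realise p = realise q"
proof -
  from assms obtain xs ys a b where valid: "valid p" "valid q" and "fst p = fst q"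
    and sq: "(a, b) \<in> SqI M r s cmp d mm G \<or> (b, a) \<in> SqI M r s cmp d mm G"
    and "snd p = xs @ a @ ys" "snd q = xs @ b @ ys"
    unfolding sq_step_def by blast
  then obtain v where pq: "p = (v, xs @ a @ ys)" "q = (v, xs @ b @ ys)"
    by (metis prod.collapse)
  let ?w = "psrc (v, xs)"
  have "realise (?w, a) = realise (?w, b)"
    using sq realise_square by metis
  moreover have "psrc (?w, a) = psrc (?w, b)"
    using sq square_nonempty square_src by (auto simp: path_src_def)
  moreover have "valid (?w, a @ ys)" "valid (?w, b @ ys)"
    using valid pq by (simp_all add: valid_path_append)
  ultimately show ?thesis
    using valid pq by (simp add: realise_append)
qed

lemma sq_equiv_realise: "eqv p q \<Longrightarrow> realise p = realise q"
  by (rule sq_equiv_invariant[OF sq_step_realise])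

text \<open>\<open>prepend f t\<close> is the path \<open>f\<^sup>i t\<close>, where \<open>i\<close> is the index of the range of \<open>t\<close>.\<close>

definition prepend :: "'m \<Rightarrow> ('m \<times> nat, 'm \<times> nat) path \<Rightarrow> ('m \<times> nat, 'm \<times> nat) path" where
  "prepend f t = ((r f, block f), (f, snd (fst t)) # snd t)"

lemma fst_prepend [simp]: "fst (prepend f t) = (r f, block f)"
  by (simp add: prepend_def)

lemma prepend_edge:
  assumes "f \<in> edges M d" "valid t" "fst (fst t) = s f"
  shows "(f, snd (fst t)) \<in> EI M s d mm" "sI s (f, snd (fst t)) = fst t"
proof -
  obtain v i where t: "fst t = (v, i)"
    by fastforce
  with valid_path_fst[OF assms(2)] assms(1,3)
  show "(f, snd (fst t)) \<in> EI M s d mm" "sI s (f, snd (fst t)) = fst t"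
    by (simp_all add: VI_iff EI_iff)
qed

lemma valid_prepend: "f \<in> edges M d \<Longrightarrow> valid t \<Longrightarrow> fst (fst t) = s f \<Longrightarrow> valid (prepend f t)"
  and realise_prepend: "f \<in> edges M d \<Longrightarrow> valid t \<Longrightarrow> fst (fst t) = s f \<Longrightarrow>
    realise (prepend f t) = cmp f (realise t)"
  using prepend_edge by (simp_all add: prepend_def)

lemma path_src_prepend: "fst (fst t) = s f \<Longrightarrow> psrc (prepend f t) = psrc t"
  by (cases "fst t") (simp add: prepend_def path_src_def)

lemma valid_Cons_eq_prepend:
  assumes "valid (v, e # es)"
  shows "(v, e # es) = prepend (fst e) (sI s e, es)" and "fst e \<in> edges M d"
proof -
  obtain f i where "e = (f, i)"
    by fastforce
  with assms show "(v, e # es) = prepend (fst e) (sI s e, es)" "fst e \<in> edges M d"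
    by (simp_all add: prepend_def EI_iff)
qed

lemma sq_equiv_prepend:
  assumes "eqv t t'" "f \<in> edges M d" "valid t" "fst (fst t) = s f"
  shows "eqv (prepend f t) (prepend f t')"
proof -
  let ?e = "(f, snd (fst t))"
  have "valid (rI r mm G ?e, [?e])" "psrc (rI r mm G ?e, [?e]) = fst t"
    using prepend_edge[OF assms(2-4)] valid_path_fst[OF assms(3)] by simp_all
  then have "eqv (path_cat (rI r mm G ?e, [?e]) t) (path_cat (rI r mm G ?e, [?e]) t')"
    using assms(1,3) by (intro sq_equiv_cat) simp_all
  moreover have "fst t' = fst t"
    using sq_equiv_fst[OF assms(1)] by simp
  ultimately show ?thesis
    by (simp add: prepend_def path_cat_def)
qed

lemma exists_lift:
  assumes "x \<in> M" "k \<in> {1..mm (s x)}"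
  shows "\<exists>p. valid p \<and> realise p = x \<and> psrc p = (s x, k)"
  using assms
proof (induction "fst (d x) + snd (d x)" arbitrary: x)
  case 0
  then have "d x = 0"
    by (simp add: prod_eq_iff)
  with 0 have "valid ((x, k), [])"
    using degree_zero_endpoints by (simp add: VI_iff verts_iff)
  with \<open>d x = 0\<close> 0 show ?case
    using degree_zero_endpoints by fastforce
next
  case (Suc n)
  then have "d x \<noteq> 0" by auto
  with Suc.prems(1) obtain f y where f: "f \<in> edges M d" "y \<in> M" "s f = r y" "cmp f y = x"
    by (rule first_edge_factorization)
  then have "d x = d f + d y" "s y = s x" "d f \<in> {(1, 0), (0, 1)}"
    by (auto simp: edges_iff d_cmp s_cmp)
  with Suc.hyps(2) have "n = fst (d y) + snd (d y)"
    by auto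
  with Suc.hyps(1) f(2) Suc.prems(2) \<open>s y = s x\<close>
  obtain t where t: "valid t" "realise t = y" "psrc t = (s x, k)"
    by force
  moreover have "fst (fst t) = s f"
    using r_realise[OF t(1)] t(2) f(3) by simp
  ultimately have "valid (prepend f t)" "realise (prepend f t) = x" "psrc (prepend f t) = (s x, k)"
    using valid_prepend[OF f(1)] realise_prepend[OF f(1)] path_src_prepend f(4) by simp_all
  then show ?case
    by blast
qed

lemma sq_step_prepend_square:
  assumes f: "f \<in> edges M d" and f': "f' \<in> edges M d" and b: "b \<in> edges M d" and g: "g \<in> edges M d"
    and "s f = r b" "s f' = r g" and eq: "cmp f b = cmp f' g"
    and t: "valid t" "fst (fst t) = s b"
  shows "step (prepend f (prepend b t)) (prepend f' (prepend g t))"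
proof -
  have M: "f \<in> M" "f' \<in> M" "b \<in> M" "g \<in> M"
    using assms by (simp_all add: edges_iff)
  have "s b = s g"
    using s_cmp[of f b] s_cmp[of f' g] M assms by simp
  then have "valid (prepend b t)" "valid (prepend g t)"
    using valid_prepend[OF b t(1)] valid_prepend[OF g t(1)] t(2) by simp_all
  then have valid: "valid (prepend f (prepend b t))" "valid (prepend f' (prepend g t))"
    using valid_prepend[OF f] valid_prepend[OF f'] assms by simp_all
  have "fst t \<in> VI M d mm"
    using valid_path_fst[OF t(1)] .
  let ?a = "[(f, block b), (b, snd (fst t))]" and ?b = "[(f', block g), (g, snd (fst t))]"
  from \<open>fst t \<in> VI M d mm\<close> \<open>s b = s g\<close> t(2) block_mem[OF b] block_mem[OF g] assms
  have sq: "(?a, ?b) \<in> SqI M r s cmp d mm G"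
    unfolding SqI_def by (cases "fst t") (auto simp: VI_iff)
  \<comment> \<open>the pairing condition makes the two ranges agree\<close>
  with valid block_eq_if_square[OF f f' b g] assms show ?thesis
    unfolding sq_step_def prepend_def
    by (intro conjI exI[of _ "[]"] exI[of _ "snd t"] exI[of _ ?a] exI[of _ ?b]) auto
qed

lemma sq_equiv_prepend_distinct:
  assumes f: "f \<in> edges M d" and f': "f' \<in> edges M d" and "f \<noteq> f'"
    and p': "valid p'" "fst (fst p') = s f" and q': "valid q'" "fst (fst q') = s f'"
    and eq: "cmp f (realise p') = cmp f' (realise q')" and src: "psrc p' = psrc q'"
    and tail_p: "\<And>t. valid t \<Longrightarrow> realise p' = realise t \<Longrightarrow> psrc p' = psrc t \<Longrightarrow> eqv p' t"
    and tail_q: "\<And>t. valid t \<Longrightarrow> realise q' = realise t \<Longrightarrow> psrc q' = psrc t \<Longrightarrow> eqv q' t"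
  shows "eqv (prepend f p') (prepend f' q')"
proof -
  obtain b g \<rho> where bg: "b \<in> edges M d" "g \<in> edges M d" "\<rho> \<in> M" "s f = r b" "s f' = r g"
      "s b = r \<rho>" "s g = r \<rho>" "cmp f b = cmp f' g"
    and \<rho>: "realise p' = cmp b \<rho>" "realise q' = cmp g \<rho>"
    using distinct_first_edges_square[OF f f' \<open>f \<noteq> f'\<close>] realise_in r_realise p' q' eq
    by metis
  have "s \<rho> = fst (psrc p')"
    using s_realise[OF p'(1)] \<rho>(1) bg by (simp add: s_cmp edges_iff)
  moreover have "psrc p' \<in> VI M d mm"
    using path_src_in[OF p'(1)] .
  ultimately obtain t where t: "valid t" "realise t = \<rho>" "psrc t = psrc p'"
    using exists_lift[OF bg(3), of "snd (psrc p')"] by (cases "psrc p'") (auto simp: VI_iff)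
  have "fst (fst t) = s b" "fst (fst t) = s g"
    using r_realise[OF t(1)] t(2) bg by simp_all
  then have "eqv p' (prepend b t)" "eqv q' (prepend g t)"
    using valid_prepend[OF bg(1) t(1)] valid_prepend[OF bg(2) t(1)] realise_prepend[OF bg(1) t(1)]
      realise_prepend[OF bg(2) t(1)] path_src_prepend[of t b] path_src_prepend[of t g] t \<rho> src
    by (auto intro!: tail_p tail_q)
  then have "eqv (prepend f p') (prepend f (prepend b t))" "eqv (prepend f' q') (prepend f' (prepend g t))"
    using sq_equiv_prepend f f' p' q' by simp_all
  moreover have "step (prepend f (prepend b t)) (prepend f' (prepend g t))"
    using sq_step_prepend_square[OF f f' bg(1,2,4,5,8) t(1)] \<open>fst (fst t) = s b\<close> .
  ultimately show ?thesis
    by (meson sq_equiv_if_step sq_equiv_sym sq_equiv_trans)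
qed

lemma sq_equiv_if_realise_eq:
  assumes "valid p" "valid q" "realise p = realise q" "psrc p = psrc q"
  shows "eqv p q"
  using assms
proof (induction "length (snd p)" arbitrary: p q)
  case 0
  moreover have "length (snd q) = length (snd p)"
    using 0 path_length d_realise by metis
  ultimately show ?case
    by (cases p; cases q) simp
next
  case (Suc n)
  have "length (snd q) = Suc n"
    using Suc path_length d_realise by metis
  with Suc.hyps(2) obtain v e ps w e' qs where pq: "p = (v, e # ps)" "q = (w, e' # qs)"
    by (metis length_Suc_conv prod.collapse)
  let ?f = "fst e" and ?f' = "fst e'" and ?p' = "(sI s e, ps)" and ?q' = "(sI s e', qs)"
  have prepend: "p = prepend ?f ?p'" "q = prepend ?f' ?q'"
    and edges: "?f \<in> edges M d" "?f' \<in> edges M d"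
    using valid_Cons_eq_prepend[OF Suc.prems(1)[unfolded pq]]
      valid_Cons_eq_prepend[OF Suc.prems(2)[unfolded pq]]
    unfolding pq by blast+
  have tails: "valid ?p'" "valid ?q'" "fst (fst ?p') = s ?f" "fst (fst ?q') = s ?f'"
    using Suc.prems(1,2) unfolding pq by (simp_all add: sI_def)
  have "length ps = n" "length qs = n"
    using Suc.hyps(2) \<open>length (snd q) = Suc n\<close> unfolding pq by simp_all
  then have IH: "\<And>t. valid t \<Longrightarrow> realise ?p' = realise t \<Longrightarrow> psrc ?p' = psrc t \<Longrightarrow> eqv ?p' t"
    "\<And>t. valid t \<Longrightarrow> realise ?q' = realise t \<Longrightarrow> psrc ?q' = psrc t \<Longrightarrow> eqv ?q' t"
    using Suc.hyps(1) tails by simp_all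
  have eq: "cmp ?f (realise ?p') = cmp ?f' (realise ?q')" and src: "psrc ?p' = psrc ?q'"
    using Suc.prems(3,4) unfolding pq by simp_all
  show ?case
  proof (cases "?f = ?f'")
    case True
    have "realise ?p' \<in> M" "realise ?q' \<in> M" "s ?f = r (realise ?p')" "s ?f' = r (realise ?q')"
      using realise_in[OF tails(1)] realise_in[OF tails(2)] r_realise[OF tails(1)]
        r_realise[OF tails(2)] tails(3,4) by simp_all
    then have "realise ?p' = realise ?q'"
      using factorization_unique[OF _ _ _ _ _ _ eq] edges True by (simp add: edges_iff)
    with IH(1) tails src have "eqv ?p' ?q'"
      by simp
    then have "eqv (prepend ?f ?p') (prepend ?f ?q')"
      using edges(1) tails(1,3) by (rule sq_equiv_prepend)
    with True show ?thesis
      unfolding prepend(1,2) by simp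
  next
    case False
    from edges False tails(1,3) tails(2,4) eq src IH
    have "eqv (prepend ?f ?p') (prepend ?f' ?q')"
      by (rule sq_equiv_prepend_distinct)
    then show ?thesis
      unfolding prepend(1,2) .
  qed
qed

theorem sq_equiv_iff_realise_eq:
  "valid p \<Longrightarrow> valid q \<Longrightarrow> eqv p q \<longleftrightarrow> realise p = realise q \<and> psrc p = psrc q"
  using sq_equiv_if_realise_eq sq_equiv_realise sq_equiv_path_src by blast

lemma countable_VI: "countable (VI M d mm)"
  and countable_EI: "countable (EI M s d mm)"
proof -
  have "countable (M \<times> (UNIV :: nat set))"
    using is_2graph by (simp add: is_2graph_def)
  moreover have "VI M d mm \<subseteq> M \<times> UNIV" "EI M s d mm \<subseteq> M \<times> UNIV"
    by (auto simp: VI_def EI_def verts_iff edges_iff)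
  ultimately show "countable (VI M d mm)" "countable (EI M s d mm)"
    by (auto intro: countable_subset)
qed

lemma path_factorization_exists:
  assumes "valid p" "pdeg p = m + n"
  shows "\<exists>p1 p2. valid p1 \<and> valid p2 \<and> psrc p1 = fst p2 \<and> pdeg p1 = m \<and> eqv p (path_cat p1 p2)"
proof -
  have x: "realise p \<in> M" "d (realise p) = m + n" "s (realise p) = fst (psrc p)"
    using realise_in[OF assms(1)] d_realise[OF assms(1)] s_realise[OF assms(1)] assms(2)
    by simp_all
  obtain \<mu> \<nu> where \<mu>\<nu>: "\<mu> \<in> M" "\<nu> \<in> M" "s \<mu> = r \<nu>" "d \<mu> = m" "d \<nu> = n"
    "cmp \<mu> \<nu> = realise p"
    by (rule factorization_exists[OF x(1,2)])
  have "s \<nu> = fst (psrc p)"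
    using s_cmp[OF \<mu>\<nu>(1-3)] \<mu>\<nu>(6) x(3) by simp
  moreover have "psrc p \<in> VI M d mm"
    using path_src_in[OF assms(1)] .
  ultimately obtain p2 where p2: "valid p2" "realise p2 = \<nu>" "psrc p2 = psrc p"
    using exists_lift[OF \<mu>\<nu>(2), of "snd (psrc p)"] by (cases "psrc p") (auto simp: VI_iff)
  have "fst p2 \<in> VI M d mm" "fst (fst p2) = s \<mu>"
    using valid_path_fst[OF p2(1)] r_realise[OF p2(1)] p2(2) \<mu>\<nu>(3) by simp_all
  then obtain p1 where p1: "valid p1" "realise p1 = \<mu>" "psrc p1 = fst p2"
    using exists_lift[OF \<mu>\<nu>(1), of "snd (fst p2)"] by (cases "fst p2") (auto simp: VI_iff)
  have "eqv p (path_cat p1 p2)"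
    using p1 p2 \<mu>\<nu>(6) assms(1)
    by (simp add: sq_equiv_iff_realise_eq valid_path_cat realise_cat path_src_cat)
  moreover have "pdeg p1 = m"
    using d_realise[OF p1(1)] p1(2) \<mu>\<nu>(4) by simp
  ultimately show ?thesis
    using p1 p2 by blast
qed

lemma path_factorization_unique:
  assumes valid: "valid p1" "valid p2" "valid q1" "valid q2"
    and "psrc p1 = fst p2" "psrc q1 = fst q2" "pdeg p1 = pdeg q1"
    and eq: "eqv (path_cat p1 p2) (path_cat q1 q2)"
  shows "eqv p1 q1 \<and> eqv p2 q2"
proof -
  have "cmp (realise p1) (realise p2) = cmp (realise q1) (realise q2)"
    and src: "psrc p2 = psrc q2"
    using eq assms by (simp_all add: sq_equiv_iff_realise_eq valid_path_cat realise_cat path_src_cat)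
  then have "realise p1 = realise q1" "realise p2 = realise q2"
    using factorization_unique[of "realise p1" "realise p2" "realise q1" "realise q2"] valid assms
      realise_in r_realise s_realise d_realise
    by simp_all
  with valid src have "eqv p2 q2"
    by (simp add: sq_equiv_iff_realise_eq)
  then have "psrc p1 = psrc q1"
    using sq_equiv_fst assms by simp
  with valid \<open>realise p1 = realise q1\<close> \<open>eqv p2 q2\<close> show ?thesis
    by (simp add: sq_equiv_iff_realise_eq)
qed

sublocale unique_path_factorization "VI M d mm" "EI M s d mm" "rI r mm G" "sI s" "dI d"
  "SqI M r s cmp d mm G"
  by unfold_locales
    (fact countable_VI countable_EI path_factorization_exists path_factorization_unique)+

end

theorem theorem5p8:
  fixes M :: "'m set" and r s :: "'m \<Rightarrow> 'm" and cmp :: "'m \<Rightarrow> 'm \<Rightarrow> 'm"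
    and d :: "'m \<Rightarrow> nat \<times> nat" and mm :: "'m \<Rightarrow> nat" and G :: "'m \<Rightarrow> nat \<Rightarrow> 'm set"
  assumes "is_2graph M r s cmp d"
    and "row_finite M r d"
    and "essential M r s d"
    and "insplit_partition M r d mm G"
    and "pairing_condition M r s cmp d mm G"
  shows "is_2graph
     (quot_mor (VI M d mm) (EI M s d mm) (rI r mm G) (sI s) (SqI M r s cmp d mm G))
     (quot_r (VI M d mm) (EI M s d mm) (rI r mm G) (sI s) (SqI M r s cmp d mm G))
     (quot_s (VI M d mm) (EI M s d mm) (rI r mm G) (sI s) (SqI M r s cmp d mm G))
     (quot_comp (VI M d mm) (EI M s d mm) (rI r mm G) (sI s) (SqI M r s cmp d mm G))
     (quot_deg (dI d))"
proof -
  interpret insplitting M r s cmp d mm G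
    using assms(1,4,5) by unfold_locales
  show ?thesis
    by (rule is_2graph_quotient)
qed

end
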